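(* Let $J\subseteq\Delta^r_n$ be an M-convex set and let $\rho\colon\Delta^r_n\to\mathbb R_{\ge0}$ be a function whose support $\{\alpha:\rho(\alpha)\ne0\}$ equals $J$. Define $f\colon\mathbb Z^n\to\mathbb R\cup\{\infty\}$ by $f(\alpha)=-\log\rho(\alpha)$ for $\alpha\in\Delta^r_n$ (with $-\log 0=\infty$) and $f(\alpha)=\infty$ for $\alpha\notin\Delta^r_n$. Then $\rho$ is a $\mathbb T_0$-representation of $J$ if and only if $f$ is an M-convex function.
   Context: $\Delta^r_n=\{\alpha\in\mathbb N^n:\sum_i\alpha_i=r\}$, $\epsilon_i$ the standard basis vectors, $\le$ componentwise. A nonempty $J\subseteq\Delta^r_n$ is M-convex if for all $\alpha,\beta\in J$ and $i$ with $\alpha_i<\beta_i$ there is $j$ with $\alpha_j>\beta_j$ and $\alpha+\epsilon_i-\epsilon_j,\ \beta-\epsilon_i+\epsilon_j\in J$. $\delta^-_J,\delta^+_J$ denote the componentwise minimum and maximum of the elements of $J$. The tropical hyperfield $\mathbb T_0$ is $\mathbb R_{\ge0}$ with its multiplication, in which $-1=1$, and where a formal sum of elements is null iff either all terms are $0$ or the maximum of the terms is attained by at least two terms. A $\mathbb T_0$-representation of $J$ is a function $\rho\colon\Delta^r_n\to\mathbb R_{\ge0}$ with support $J$ such that for all $2\le s\le r$, all $\alpha\in\Delta^{r-s}_n$ with $\delta^-_J\le\alpha$, and all $i_0,\dots,i_s,j_2,\dots,j_s\in[n]$ with $\alpha+\epsilon_{i_0}+\dots+\epsilon_{i_s}+\epsilon_{j_2}+\dots+\epsilon_{j_s}\le\delta^+_J$,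 the formal sum $\sum_{k=0}^s\rho(\alpha-\epsilon_{i_k}+\epsilon_{i_0}+\dots+\epsilon_{i_s})\cdot\rho(\alpha+\epsilon_{i_k}+\epsilon_{j_2}+\dots+\epsilon_{j_s})$ is null in $\mathbb T_0$. A function $f\colon\mathbb Z^n\to\mathbb R\cup\{\infty\}$ is M-convex (in Murota's sense) if its support $\{\alpha:f(\alpha)\ne\infty\}$ is nonempty and for all $\alpha,\beta$ in the support and every $k$ with $\alpha_k>\beta_k$ there is $l$ with $\alpha_l<\beta_l$ and $f(\alpha)+f(\beta)\ge f(\alpha-\epsilon_k+\epsilon_l)+f(\beta+\epsilon_k-\epsilon_l)$. *)

theory Defs
  imports Complex_Main "HOL-Library.Extended_Real" "HOL-Library.Function_Algebras"
begin

text \<open>Integer vectors in Z^n are modelled as functions nat => int vanishing at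
  every coordinate i >= n; coordinates are indexed 0..n-1.\<close>

definition Zn :: "nat \<Rightarrow> (nat \<Rightarrow> int) set" where
  "Zn n = {\<alpha>. \<forall>i\<ge>n. \<alpha> i = 0}"

definition simplex :: "nat \<Rightarrow> nat \<Rightarrow> (nat \<Rightarrow> int) set" where
  "simplex n r = {\<alpha>. (\<forall>i. 0 \<le> \<alpha> i) \<and> (\<forall>i\<ge>n. \<alpha> i = 0) \<and> (\<Sum>i<n. \<alpha> i) = int r}"

definition ev :: "nat \<Rightarrow> nat \<Rightarrow> int" where
  "ev i = (\<lambda>j. if j = i then 1 else 0)"

definition M_convex_set :: "nat \<Rightarrow> (nat \<Rightarrow> int) set \<Rightarrow> bool" where
  "M_convex_set n J \<longleftrightarrow> J \<noteq> {} \<and>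
     (\<forall>\<alpha>\<in>J. \<forall>\<beta>\<in>J. \<forall>i<n. \<alpha> i < \<beta> i \<longrightarrow>
        (\<exists>j<n. \<alpha> j > \<beta> j \<and> \<alpha> + ev i - ev j \<in> J \<and> \<beta> - ev i + ev j \<in> J))"

definition delta_minus :: "(nat \<Rightarrow> int) set \<Rightarrow> nat \<Rightarrow> int" where
  "delta_minus J = (\<lambda>i. Min ((\<lambda>\<alpha>. \<alpha> i) ` J))"

definition delta_plus :: "(nat \<Rightarrow> int) set \<Rightarrow> nat \<Rightarrow> int" where
  "delta_plus J = (\<lambda>i. Max ((\<lambda>\<alpha>. \<alpha> i) ` J))"

text \<open>Nullity of a formal sum of terms t k (k in K) in the tropical hyperfield T_0:
  either all terms are 0, or the maximum is attained by at least two terms.\<close>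

definition T0_null :: "nat set \<Rightarrow> (nat \<Rightarrow> real) \<Rightarrow> bool" where
  "T0_null K t \<longleftrightarrow> (\<forall>k\<in>K. t k = 0) \<or>
     (\<exists>k1\<in>K. \<exists>k2\<in>K. k1 \<noteq> k2 \<and> t k1 = Max (t ` K) \<and> t k2 = Max (t ` K))"

definition T0_rep :: "nat \<Rightarrow> nat \<Rightarrow> (nat \<Rightarrow> int) set \<Rightarrow> ((nat \<Rightarrow> int) \<Rightarrow> real) \<Rightarrow> bool" where
  "T0_rep n r J \<rho> \<longleftrightarrow>
     (\<forall>\<alpha>\<in>simplex n r. \<rho> \<alpha> \<ge> 0) \<and> {\<alpha>\<in>simplex n r. \<rho> \<alpha> \<noteq> 0} = J \<and>
     (\<forall>s \<alpha> (i::nat \<Rightarrow> nat) (j::nat \<Rightarrow> nat).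
        2 \<le> s \<and> s \<le> r \<and> \<alpha> \<in> simplex n (r - s) \<and> delta_minus J \<le> \<alpha> \<and>
        (\<forall>k\<le>s. i k < n) \<and> (\<forall>k\<in>{2..s}. j k < n) \<and>
        \<alpha> + (\<Sum>k\<le>s. ev (i k)) + (\<Sum>k\<in>{2..s}. ev (j k)) \<le> delta_plus J
      \<longrightarrow> T0_null {..s}
            (\<lambda>k. \<rho> (\<alpha> - ev (i k) + (\<Sum>m\<le>s. ev (i m))) *
                 \<rho> (\<alpha> + ev (i k) + (\<Sum>m\<in>{2..s}. ev (j m)))))"

definition M_convex_fun :: "nat \<Rightarrow> ((nat \<Rightarrow> int) \<Rightarrow> ereal) \<Rightarrow> bool" where
  "M_convex_fun n f \<longleftrightarrow>
     (let D = {\<alpha>\<in>Zn n. f \<alpha> \<noteq> \<infinity>} in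
       D \<noteq> {} \<and>
       (\<forall>\<alpha>\<in>D. \<forall>\<beta>\<in>D. \<forall>k<n. \<alpha> k > \<beta> k \<longrightarrow>
          (\<exists>l<n. \<alpha> l < \<beta> l \<and>
             f \<alpha> + f \<beta> \<ge> f (\<alpha> - ev k + ev l) + f (\<beta> + ev k - ev l))))"

definition neglog_fun :: "nat \<Rightarrow> nat \<Rightarrow> ((nat \<Rightarrow> int) \<Rightarrow> real) \<Rightarrow> (nat \<Rightarrow> int) \<Rightarrow> ereal" where
  "neglog_fun n r \<rho> \<alpha> =
     (if \<alpha> \<in> simplex n r \<and> \<rho> \<alpha> \<noteq> 0 then ereal (- ln (\<rho> \<alpha>)) else \<infinity>)"

end

theory Submission
  imports Defs
begin

text \<open>Let \<open>R\<close> be \<open>\<rho>\<close> restricted to the simplex (zero outside). Taking logarithms,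
  M-convexity of \<open>f = -log R\<close> is the multiplicative exchange inequality
  \<open>R x R y \<le> R (x - e\<^sub>u + e\<^sub>l) R (y + e\<^sub>u - e\<^sub>l)\<close> for \<open>x, y \<in> J\<close> with \<open>x\<^sub>u > y\<^sub>u\<close>.
  If it holds, take a nonzero term \<open>\<rho>(A\<^sub>k) \<rho>(B\<^sub>k)\<close> of a \<open>T\<^sub>0\<close>-sum. Either its index \<open>i\<^sub>k\<close>
  occurs twice, and an equal term exists, or exchanging from \<open>B\<^sub>k\<close> towards \<open>A\<^sub>k\<close> at
  coordinate \<open>i\<^sub>k\<close> produces another term of the same sum that is at least as large; so a
  nonzero maximum is attained twice.
  Conversely, the three-term relations (\<open>s = 2\<close>, with \<open>\<alpha> = inf x y\<close>) give the exchange
  inequality for pairs at distance at most 2, and Murota's local-to-global argument, an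
  induction on the distance that uses M-convexity of the support \<open>J\<close>, extends it to all pairs.\<close>

lemma ev_apply [simp]: "ev i j = (if j = i then 1 else 0)"
  by (simp add: ev_def)

lemma sum_apply: "(\<Sum>k\<in>K. F k) x = (\<Sum>k\<in>K. F k x)"
  by (induction K rule: infinite_finite_induct) auto

lemma sum_ev_apply: "finite K \<Longrightarrow> (\<Sum>k\<in>K. ev (i k)) c = int (card {k\<in>K. i k = c})"
  by (simp add: sum_apply sum.If_cases Int_def eq_commute[of c])

lemma finite_simplex: "finite (simplex n r)"
proof (rule finite_subset)
  show "simplex n r \<subseteq> {f. \<forall>x. (x \<in> {..<n} \<longrightarrow> f x \<in> {0..int r}) \<and> (x \<notin> {..<n} \<longrightarrow> f x = 0)}"
  proof safe
    fix f x assume f: "f \<in> simplex n r" and "x < n"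
    then have "f x \<le> (\<Sum>i<n. f i)"
      by (intro member_le_sum) (auto simp: simplex_def)
    then show "f x \<in> {0..int r}" using f by (auto simp: simplex_def)
  qed (auto simp: simplex_def, meson not_le)
qed (rule finite_set_of_finite_funs; simp)

lemma simplex_subset_Zn: "simplex n r \<subseteq> Zn n"
  by (auto simp: simplex_def Zn_def)

lemma simplex_add: "\<alpha> \<in> simplex n a \<Longrightarrow> \<beta> \<in> simplex n b \<Longrightarrow> \<alpha> + \<beta> \<in> simplex n (a + b)"
  by (auto simp: simplex_def sum.distrib)

lemma sum_ev_in_simplex:
  assumes "finite K" "\<forall>k\<in>K. i k < n"
  shows "(\<Sum>k\<in>K. ev (i k)) \<in> simplex n (card K)"
proof -
  have "(\<Sum>c<n. (\<Sum>k\<in>K. ev (i k)) c) = (\<Sum>k\<in>K. \<Sum>c<n. ev (i k) c)"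
    by (simp only: sum_apply) (rule sum.swap)
  also have "\<dots> = (\<Sum>k\<in>K. 1)"
    using assms by (intro sum.cong) (auto simp: sum.delta)
  finally show ?thesis
    using assms by (auto simp: simplex_def sum_apply sum_nonneg intro!: sum.neutral)
qed

lemma ev_in_simplex: "i < n \<Longrightarrow> ev i \<in> simplex n 1"
  using sum_ev_in_simplex[of "{0::nat}" "\<lambda>_. i" n] by simp

lemma simplex_move:
  assumes "x \<in> simplex n r" "x u > 0" "u < n" "l < n"
  shows "x - ev u + ev l \<in> simplex n r"
  using assms by (auto simp: simplex_def sum.distrib sum_subtractf sum.delta)

lemma simplex_diff_two:
  assumes "x \<in> simplex n r" "u < n" "w < n" "\<forall>c. 0 \<le> (x - ev u - ev w) c"
  shows "2 \<le> r" "x - ev u - ev w \<in> simplex n (r - 2)"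
proof -
  have sum: "(\<Sum>c<n. (x - ev u - ev w) c) = int r - 2"
    using assms(1-3) by (simp add: simplex_def sum_subtractf sum.delta)
  then show "2 \<le> r"
    using sum_nonneg[of "{..<n}" "x - ev u - ev w"] assms(4) by simp
  then show "x - ev u - ev w \<in> simplex n (r - 2)"
    using assms sum by (auto simp: simplex_def of_nat_diff)
qed

lemma M_convex_setD:
  "M_convex_set n J \<Longrightarrow> \<alpha> \<in> J \<Longrightarrow> \<beta> \<in> J \<Longrightarrow> i < n \<Longrightarrow> \<alpha> i < \<beta> i \<Longrightarrow>
    \<exists>j<n. \<beta> j < \<alpha> j \<and> \<alpha> + ev i - ev j \<in> J \<and> \<beta> - ev i + ev j \<in> J"
  unfolding M_convex_set_def by blast

lemma delta_minus_le_inf: "finite J \<Longrightarrow> x \<in> J \<Longrightarrow> y \<in> J \<Longrightarrow> delta_minus J \<le> inf x y"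
  by (auto simp: delta_minus_def le_fun_def le_inf_iff intro!: Min_le)

lemma sup_le_delta_plus: "finite J \<Longrightarrow> x \<in> J \<Longrightarrow> y \<in> J \<Longrightarrow> sup x y \<le> delta_plus J"
  by (auto simp: delta_plus_def le_fun_def le_sup_iff intro!: Max_ge)

text \<open>For \<open>x, y\<close> in a common simplex, \<open>pdist n x y\<close> is half their \<open>l\<^sub>1\<close>-distance.\<close>

definition pdist :: "nat \<Rightarrow> (nat \<Rightarrow> int) \<Rightarrow> (nat \<Rightarrow> int) \<Rightarrow> nat" where
  "pdist n x y = (\<Sum>i<n. nat (x i - y i))"

lemma pdist_move_right: "pdist n x (y + ev u - ev v) = pdist n (x - ev u + ev v) y"
  by (simp add: pdist_def algebra_simps)

lemma pdist_move_left_less: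
  assumes "u < n" "y u < x u" "x v < y v"
  shows "pdist n (x - ev u + ev v) y < pdist n x y"
  unfolding pdist_def
proof (rule sum_strict_mono_ex1)
  show "\<forall>i\<in>{..<n}. nat ((x - ev u + ev v) i - y i) \<le> nat (x i - y i)"
    using assms by auto
  show "\<exists>i\<in>{..<n}. nat ((x - ev u + ev v) i - y i) < nat (x i - y i)"
    using assms by (intro bexI[of _ u]) auto
qed simp

lemma pdist_add_two_le: "pdist n (y + ev a + ev b - ev c - ev d) y \<le> 2"
proof -
  have "pdist n (y + ev a + ev b - ev c - ev d) y \<le>
      (\<Sum>i<n. (if i = a then 1 else 0) + (if i = b then 1 else 0))"
    unfolding pdist_def by (intro sum_mono) auto
  also have "\<dots> \<le> 2" by (simp add: sum.distrib sum.delta)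
  finally show ?thesis .
qed

lemma pdist_eq_0_simplex:
  assumes "x \<in> simplex n r" "y \<in> simplex n r" "pdist n x y = 0"
  shows "x = y"
proof -
  have le: "\<forall>i\<in>{..<n}. 0 \<le> y i - x i"
    using assms(3) by (simp add: pdist_def)
  have "(\<Sum>i<n. y i - x i) = 0"
    using assms(1,2) by (simp add: simplex_def sum_subtractf)
  then have "\<forall>i\<in>{..<n}. y i - x i = 0"
    by (subst (asm) sum_nonneg_eq_0_iff) (use le in auto)
  moreover have "x i = y i" if "n \<le> i" for i
    using assms(1,2) that by (simp add: simplex_def)
  ultimately show ?thesis by (metis eq_iff_diff_eq_0 ext lessThan_iff not_le)
qed

lemma simplex_neq_obtain_greater:
  assumes "x \<in> simplex n r" "y \<in> simplex n r" "x \<noteq> y"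
  obtains w where "w < n" "y w < x w"
proof -
  have "pdist n x y \<noteq> 0" using pdist_eq_0_simplex assms by blast
  then have "\<exists>w<n. nat (x w - y w) \<noteq> 0"
    using sum.neutral[of "{..<n}" "\<lambda>i. nat (x i - y i)"] by (auto simp: pdist_def)
  then show ?thesis using that by auto
qed

lemma M_convex_set_pdist_le_2:
  assumes J: "J \<subseteq> simplex n r" "M_convex_set n J"
    and xy: "x \<in> J" "y \<in> J" "u < n" "y u < x u" "pdist n x y \<le> 2"
  obtains a where "a < n" "x a < y a" "y = x - ev u + ev a"
  | a b w where "a < n" "b < n" "w < n" "x a < y a" "x b < y b" "a \<notin> {u, w}" "b \<notin> {u, w}"
      "y = x - ev u - ev w + ev a + ev b"
proof -
  obtain a where a: "a < n" "x a < y a" and x1: "x - ev u + ev a \<in> J"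
    using M_convex_setD[OF J(2) xy(2,1,3,4)] by auto
  define x1 where "x1 = x - ev u + ev a"
  have "a \<noteq> u" using a xy(4) by auto
  show ?thesis
  proof (cases "x1 = y")
    case True
    then show ?thesis by (intro that(1)[OF a]) (simp add: x1_def)
  next
    case False
    then obtain w where w: "w < n" "y w < x1 w"
      using simplex_neq_obtain_greater[of x1 n r y] x1 xy(2) J(1) by (auto simp: x1_def)
    obtain b where b: "b < n" "x1 b < y b" and x2: "x1 - ev w + ev b \<in> J"
      using M_convex_setD[OF J(2) xy(2) x1[folded x1_def] w] by auto
    have "pdist n x1 y < pdist n x y"
      unfolding x1_def using pdist_move_left_less a xy(3,4) by blast
    moreover have "pdist n (x1 - ev w + ev b) y < pdist n x1 y"
      using pdist_move_left_less w b by blast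
    ultimately have "x1 - ev w + ev b = y"
      using pdist_eq_0_simplex[of _ n r y] x2 xy(2,5) J(1) by fastforce
    moreover have "w \<noteq> a" "b \<noteq> u" "w \<noteq> b"
      using a w b xy(4) \<open>a \<noteq> u\<close> by (auto simp: x1_def)
    moreover have "x b < y b"
      using b \<open>b \<noteq> u\<close> by (auto simp: x1_def split: if_splits)
    ultimately show ?thesis
      using that(2) a b w \<open>a \<noteq> u\<close> by (fastforce simp: x1_def algebra_simps)
  qed
qed

lemma T0_null_dominated:
  assumes "T0_null K t" "finite K" "k \<in> K" "0 < t k"
  shows "\<exists>k'\<in>K. k' \<noteq> k \<and> t k \<le> t k'"
proof -
  obtain k1 k2 where "k1 \<in> K" "k2 \<in> K" "k1 \<noteq> k2"
    and "t k1 = Max (t ` K)" "t k2 = Max (t ` K)"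
    using assms(1,3,4) unfolding T0_null_def by auto
  moreover have "t k \<le> Max (t ` K)" using assms(2,3) by simp
  ultimately show ?thesis by metis
qed

lemma T0_null_if_dominated:
  assumes "finite K" and nonneg: "\<forall>k\<in>K. 0 \<le> t k"
    and dom: "\<forall>k\<in>K. 0 < t k \<longrightarrow> (\<exists>k'\<in>K. k' \<noteq> k \<and> t k \<le> t k')"
  shows "T0_null K t"
proof (cases "\<forall>k\<in>K. t k = 0")
  case False
  then obtain k where k: "k \<in> K" "t k \<noteq> 0" by blast
  then have "Max (t ` K) \<in> t ` K" using \<open>finite K\<close> by (intro Max_in) auto
  then obtain k0 where k0: "k0 \<in> K" "t k0 = Max (t ` K)" by (metis imageE)
  have "t k \<le> t k0" using \<open>finite K\<close> k(1) k0(2) by simp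
  moreover have "0 < t k" using nonneg k by (simp add: less_le)
  ultimately obtain k' where k': "k' \<in> K" "k' \<noteq> k0" "t k0 \<le> t k'"
    using dom k0(1) by fastforce
  moreover have "t k' \<le> Max (t ` K)" using \<open>finite K\<close> k'(1) by simp
  ultimately have "t k' = Max (t ` K)" using k0(2) by linarith
  then show ?thesis unfolding T0_null_def using k0 k' by blast
qed (simp add: T0_null_def)

definition simplex_weight :: "nat \<Rightarrow> nat \<Rightarrow> ((nat \<Rightarrow> int) \<Rightarrow> real) \<Rightarrow> (nat \<Rightarrow> int) \<Rightarrow> real" where
  "simplex_weight n r \<rho> z = (if z \<in> simplex n r then \<rho> z else 0)"

definition exchange_at ::
    "nat \<Rightarrow> ((nat \<Rightarrow> int) \<Rightarrow> real) \<Rightarrow> (nat \<Rightarrow> int) \<Rightarrow> (nat \<Rightarrow> int) \<Rightarrow> nat \<Rightarrow> bool" where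
  "exchange_at n R x y u \<longleftrightarrow>
     (\<exists>l<n. x l < y l \<and> R x * R y \<le> R (x - ev u + ev l) * R (y + ev u - ev l))"

lemma neglog_add_ge_iff:
  fixes a b c d :: real
  assumes "a > 0" "b > 0" "c \<ge> 0" "d \<ge> 0"
  shows "ereal (- ln a) + ereal (- ln b) \<ge>
           (if c \<noteq> 0 then ereal (- ln c) else \<infinity>) + (if d \<noteq> 0 then ereal (- ln d) else \<infinity>)
         \<longleftrightarrow> a * b \<le> c * d"
proof (cases "c > 0 \<and> d > 0")
  case True
  then have "ereal (- ln a) + ereal (- ln b) \<ge> ereal (- ln c) + ereal (- ln d) \<longleftrightarrow>
      ln (a * b) \<le> ln (c * d)"
    using assms by (simp add: ln_mult) linarith
  also have "\<dots> \<longleftrightarrow> a * b \<le> c * d"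
    using assms True by simp
  finally show ?thesis using True by simp
next
  case False
  then have "c * d = 0" using assms by auto
  then show ?thesis using False assms by (auto simp: not_le)
qed

lemma neglog_fun_eq:
  "neglog_fun n r \<rho> z =
     (if simplex_weight n r \<rho> z \<noteq> 0 then ereal (- ln (simplex_weight n r \<rho> z)) else \<infinity>)"
  by (simp add: neglog_fun_def simplex_weight_def)

lemma M_convex_fun_neglog_iff_exchange:
  assumes J: "J \<subseteq> simplex n r" "J \<noteq> {}"
    and nonneg: "\<forall>\<alpha>\<in>simplex n r. \<rho> \<alpha> \<ge> 0"
    and supp: "{\<alpha>\<in>simplex n r. \<rho> \<alpha> \<noteq> 0} = J"
  shows "M_convex_fun n (neglog_fun n r \<rho>) \<longleftrightarrow>
         (\<forall>x\<in>J. \<forall>y\<in>J. \<forall>u<n. y u < x u \<longrightarrow> exchange_at n (simplex_weight n r \<rho>) x y u)"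
proof -
  let ?f = "neglog_fun n r \<rho>" and ?R = "simplex_weight n r \<rho>"
  have dom: "{\<alpha>\<in>Zn n. ?f \<alpha> \<noteq> \<infinity>} = J"
    using supp simplex_subset_Zn[of n r] by (auto simp: neglog_fun_def)
  have R_nonneg: "?R z \<ge> 0" for z
    using nonneg by (simp add: simplex_weight_def)
  have R_pos: "?R x > 0" if "x \<in> J" for x
    using that supp nonneg by (auto simp: simplex_weight_def less_le)
  have "?f x + ?f y \<ge> ?f (x - ev u + ev l) + ?f (y + ev u - ev l) \<longleftrightarrow>
      ?R x * ?R y \<le> ?R (x - ev u + ev l) * ?R (y + ev u - ev l)"
    if "x \<in> J" "y \<in> J" for x y u l
    using neglog_add_ge_iff[OF R_pos[OF that(1)] R_pos[OF that(2)] R_nonneg R_nonneg]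
      R_pos[OF that(1)] R_pos[OF that(2)]
    by (simp add: neglog_fun_eq)
  then show ?thesis
    unfolding M_convex_fun_def Let_def dom exchange_at_def using J(2) by blast
qed

lemma exchange_dominates_pluecker_term:
  fixes R :: "(nat \<Rightarrow> int) \<Rightarrow> real" and i :: "nat \<Rightarrow> nat" and K :: "nat set"
    and \<alpha> \<gamma> :: "nat \<Rightarrow> int"
  defines "A \<equiv> \<lambda>k. \<alpha> - ev (i k) + (\<Sum>m\<in>K. ev (i m))"
    and "B \<equiv> \<lambda>k. \<alpha> + ev (i k) + \<gamma>"
  assumes K: "finite K" "k \<in> K" "\<forall>m\<in>K. i m < n" and \<gamma>: "\<forall>c. 0 \<le> \<gamma> c"
    and R_nonneg: "\<forall>z. 0 \<le> R z" and R_supp: "\<forall>z. 0 < R z \<longrightarrow> z \<in> J"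
    and exch: "\<forall>x\<in>J. \<forall>y\<in>J. \<forall>u<n. y u < x u \<longrightarrow> exchange_at n R x y u"
    and pos: "0 < R (A k) * R (B k)"
  shows "\<exists>k'\<in>K. k' \<noteq> k \<and> R (A k) * R (B k) \<le> R (A k') * R (B k')"
proof (cases "\<exists>k'\<in>K. k' \<noteq> k \<and> i k' = i k")
  case True
  then show ?thesis by (auto simp: A_def B_def)
next
  case False
  define c where "c = i k"
  have "{m\<in>K. i m = c} = {k}" using False K(2) by (auto simp: c_def)
  then have SI_c: "(\<Sum>m\<in>K. ev (i m)) c = 1" using K(1) by (simp add: sum_ev_apply)
  then have "A k c < B k c" using \<gamma>[rule_format, of c] by (simp add: A_def B_def c_def)
  moreover have "0 < R (A k)" "0 < R (B k)"
    using pos R_nonneg[rule_format, of "A k"] R_nonneg[rule_format, of "B k"]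
    by (auto simp: zero_less_mult_iff)
  then have "A k \<in> J" "B k \<in> J" using R_supp by auto
  moreover have "c < n" using K by (simp add: c_def)
  ultimately have "exchange_at n R (B k) (A k) c" using exch by blast
  then obtain l where l: "B k l < A k l"
    and le: "R (B k) * R (A k) \<le> R (B k - ev c + ev l) * R (A k + ev c - ev l)"
    unfolding exchange_at_def by blast
  have "l \<noteq> c" using l SI_c \<gamma>[rule_format, of c] by (auto simp: A_def B_def c_def)
  then have "0 < (\<Sum>m\<in>K. ev (i m)) l" using l \<gamma>[rule_format, of l] by (simp add: A_def B_def c_def)
  then have "{m\<in>K. i m = l} \<noteq> {}" using K(1) by (auto simp: sum_ev_apply card_gt_0_iff)
  then obtain k1 where k1: "k1 \<in> K" "i k1 = l" by blast
  have "B k - ev c + ev l = B k1" "A k + ev c - ev l = A k1"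
    using k1 by (simp_all add: A_def B_def c_def algebra_simps)
  then have "R (A k) * R (B k) \<le> R (A k1) * R (B k1)" using le by (simp add: mult.commute)
  moreover have "k1 \<noteq> k" using k1(2) \<open>l \<noteq> c\<close> by (auto simp: c_def)
  ultimately show ?thesis using k1(1) by blast
qed

lemma pluecker_terms_in_simplex:
  assumes s: "2 \<le> s" "s \<le> r" and \<alpha>: "\<alpha> \<in> simplex n (r - s)"
    and i: "\<forall>k\<le>s. i k < n" and j: "\<forall>k\<in>{2..s}. j k < n" and k: "k \<le> s"
  shows "\<alpha> - ev (i k) + (\<Sum>m\<le>s. ev (i m)) \<in> simplex n r"
    and "\<alpha> + ev (i k) + (\<Sum>m\<in>{2..s}. ev (j m)) \<in> simplex n r"
proof -
  have "(\<Sum>m\<in>{..s}-{k}. ev (i m)) \<in> simplex n s"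
    using sum_ev_in_simplex[of "{..s}-{k}" i n] i k by simp
  then have "\<alpha> + (\<Sum>m\<in>{..s}-{k}. ev (i m)) \<in> simplex n r"
    using simplex_add[OF \<alpha>] s(2) by fastforce
  moreover have "\<alpha> - ev (i k) + (\<Sum>m\<le>s. ev (i m)) = \<alpha> + (\<Sum>m\<in>{..s}-{k}. ev (i m))"
    using k by (simp add: sum.remove)
  ultimately show "\<alpha> - ev (i k) + (\<Sum>m\<le>s. ev (i m)) \<in> simplex n r" by metis
  have "(\<Sum>m\<in>{2..s}. ev (j m)) \<in> simplex n (s - 1)"
    using sum_ev_in_simplex[of "{2..s}" j n] j by simp
  then have "ev (i k) + (\<Sum>m\<in>{2..s}. ev (j m)) \<in> simplex n s"
    using simplex_add[OF ev_in_simplex, of "i k" n] i k s(1) by fastforce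
  then have "\<alpha> + (ev (i k) + (\<Sum>m\<in>{2..s}. ev (j m))) \<in> simplex n r"
    using simplex_add[OF \<alpha>] s(2) by fastforce
  then show "\<alpha> + ev (i k) + (\<Sum>m\<in>{2..s}. ev (j m)) \<in> simplex n r"
    by (simp add: add.assoc)
qed

lemma T0_rep_if_exchange:
  assumes nonneg: "\<forall>\<alpha>\<in>simplex n r. \<rho> \<alpha> \<ge> 0"
    and supp: "{\<alpha>\<in>simplex n r. \<rho> \<alpha> \<noteq> 0} = J"
    and exch: "\<forall>x\<in>J. \<forall>y\<in>J. \<forall>u<n. y u < x u \<longrightarrow> exchange_at n (simplex_weight n r \<rho>) x y u"
  shows "T0_rep n r J \<rho>"
  unfolding T0_rep_def
proof (intro conjI allI impI)
  fix s \<alpha> and i j :: "nat \<Rightarrow> nat"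
  assume "2 \<le> s \<and> s \<le> r \<and> \<alpha> \<in> simplex n (r - s) \<and> delta_minus J \<le> \<alpha> \<and>
    (\<forall>k\<le>s. i k < n) \<and> (\<forall>k\<in>{2..s}. j k < n) \<and>
    \<alpha> + (\<Sum>k\<le>s. ev (i k)) + (\<Sum>k\<in>{2..s}. ev (j k)) \<le> delta_plus J"
  then have s: "2 \<le> s" "s \<le> r" and \<alpha>: "\<alpha> \<in> simplex n (r - s)"
    and i: "\<forall>k\<le>s. i k < n" and j: "\<forall>k\<in>{2..s}. j k < n" by auto
  let ?R = "simplex_weight n r \<rho>"
  define \<gamma> where "\<gamma> = (\<Sum>m\<in>{2..s}. ev (j m))"
  define A where "A k = \<alpha> - ev (i k) + (\<Sum>m\<le>s. ev (i m))" for k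
  define B where "B k = \<alpha> + ev (i k) + \<gamma>" for k
  have A_simplex: "A k \<in> simplex n r" and B_simplex: "B k \<in> simplex n r" if "k \<le> s" for k
    using pluecker_terms_in_simplex[OF s \<alpha> i j that] by (simp_all add: A_def B_def \<gamma>_def)
  have terms: "\<rho> (A k) * \<rho> (B k) = ?R (A k) * ?R (B k)" if "k \<le> s" for k
    using A_simplex[OF that] B_simplex[OF that] by (simp add: simplex_weight_def)
  have "\<forall>k\<in>{..s}. 0 \<le> \<rho> (A k) * \<rho> (B k)"
    using A_simplex B_simplex nonneg by simp
  moreover have "\<exists>k'\<in>{..s}. k' \<noteq> k \<and> \<rho> (A k) * \<rho> (B k) \<le> \<rho> (A k') * \<rho> (B k')"
    if k: "k \<in> {..s}" and pos: "0 < \<rho> (A k) * \<rho> (B k)" for k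
  proof -
    have "\<forall>z. 0 \<le> ?R z" "\<forall>z. 0 < ?R z \<longrightarrow> z \<in> J" "\<forall>c. 0 \<le> \<gamma> c"
      using nonneg supp sum_ev_in_simplex[of "{2..s}" j n] j
      by (auto simp: simplex_weight_def simplex_def \<gamma>_def)
    with exch i k pos terms[of k]
    obtain k' where "k' \<in> {..s}" "k' \<noteq> k" "?R (A k) * ?R (B k) \<le> ?R (A k') * ?R (B k')"
      using exchange_dominates_pluecker_term[of "{..s}" k i n \<gamma> ?R J \<alpha>]
      unfolding A_def B_def by auto
    then show ?thesis using terms k by auto
  qed
  ultimately have "T0_null {..s} (\<lambda>k. \<rho> (A k) * \<rho> (B k))"
    by (intro T0_null_if_dominated) auto
  then show "T0_null {..s} (\<lambda>k. \<rho> (\<alpha> - ev (i k) + (\<Sum>m\<le>s. ev (i m))) *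
                                 \<rho> (\<alpha> + ev (i k) + (\<Sum>m\<in>{2..s}. ev (j m))))"
    by (simp add: A_def B_def \<gamma>_def)
qed (use nonneg supp in auto)

lemma T0_rep_three_term:
  assumes T0: "T0_rep n r J \<rho>" and "2 \<le> r" "\<alpha> \<in> simplex n (r - 2)" "delta_minus J \<le> \<alpha>"
    "\<alpha> + ev u + ev a + ev b + ev w \<le> delta_plus J" "u < n" "a < n" "b < n" "w < n"
    and pos: "0 < \<rho> (\<alpha> + ev a + ev b) * \<rho> (\<alpha> + ev u + ev w)"
  shows "\<rho> (\<alpha> + ev a + ev b) * \<rho> (\<alpha> + ev u + ev w) \<le> \<rho> (\<alpha> + ev u + ev b) * \<rho> (\<alpha> + ev a + ev w) \<or>
         \<rho> (\<alpha> + ev a + ev b) * \<rho> (\<alpha> + ev u + ev w) \<le> \<rho> (\<alpha> + ev u + ev a) * \<rho> (\<alpha> + ev b + ev w)"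
proof -
  define i where "i k = (if k = 0 then u else if k = 1 then a else b)" for k :: nat
  define t where "t = (\<lambda>k. \<rho> (\<alpha> - ev (i k) + (ev u + ev a + ev b)) * \<rho> (\<alpha> + ev (i k) + ev w))"
  have sum_i: "(\<Sum>k\<le>2. ev (i k)) = ev u + ev a + ev b"
    by (simp add: i_def numeral_2_eq_2)
  have "\<forall>k\<le>2. i k < n" using assms(6-8) by (simp add: i_def)
  then have "T0_null {..2} (\<lambda>k. \<rho> (\<alpha> - ev (i k) + (\<Sum>m\<le>2. ev (i m))) *
                               \<rho> (\<alpha> + ev (i k) + (\<Sum>m\<in>{2..2::nat}. ev w)))"
    using assms(2-9)
    by (intro T0[unfolded T0_rep_def, THEN conjunct2, THEN conjunct2, rule_format])
      (simp add: sum_i add.assoc)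
  then have "T0_null {..2} t" by (simp add: t_def sum_i)
  moreover have "t 0 = \<rho> (\<alpha> + ev a + ev b) * \<rho> (\<alpha> + ev u + ev w)"
    "t 1 = \<rho> (\<alpha> + ev u + ev b) * \<rho> (\<alpha> + ev a + ev w)"
    "t 2 = \<rho> (\<alpha> + ev u + ev a) * \<rho> (\<alpha> + ev b + ev w)"
    by (simp_all add: t_def i_def algebra_simps)
  ultimately obtain k where "k \<le> 2" "k \<noteq> 0" "t 0 \<le> t k"
    using T0_null_dominated[of "{..2}" t 0] pos by auto
  moreover have "k = 1 \<or> k = 2" using \<open>k \<le> 2\<close> \<open>k \<noteq> 0\<close> by arith
  ultimately show ?thesis using \<open>t 0 = _\<close> \<open>t 1 = _\<close> \<open>t 2 = _\<close> by auto
qed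

lemma exchange_at_if_T0_rep_pdist_le_2:
  assumes J: "J \<subseteq> simplex n r" "M_convex_set n J"
    and nonneg: "\<forall>\<alpha>\<in>simplex n r. \<rho> \<alpha> \<ge> 0"
    and supp: "{\<alpha>\<in>simplex n r. \<rho> \<alpha> \<noteq> 0} = J"
    and T0: "T0_rep n r J \<rho>"
    and xy: "x \<in> J" "y \<in> J" "u < n" "y u < x u" "pdist n x y \<le> 2"
  shows "exchange_at n (simplex_weight n r \<rho>) x y u"
  using J xy
proof (cases rule: M_convex_set_pdist_le_2)
  case (1 a)
  then have "y + ev u - ev a = x" by (simp add: algebra_simps)
  then show ?thesis using 1 by (auto simp: exchange_at_def mult.commute)
next
  case (2 a b w)
  let ?R = "simplex_weight n r \<rho>"
  define \<alpha> where "\<alpha> = x - ev u - ev w"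
  have x: "x = \<alpha> + ev u + ev w" and y: "y = \<alpha> + ev a + ev b"
    using 2 by (simp_all add: \<alpha>_def algebra_simps)
  have xs: "x \<in> simplex n r" and ys: "y \<in> simplex n r" using xy(1,2) J(1) by auto
  have "inf x y = \<alpha>" "sup x y = \<alpha> + ev u + ev a + ev b + ev w"
    using 2 by (auto simp: fun_eq_iff x y inf_min sup_max)
  moreover have "finite J" using J(1) finite_simplex finite_subset by blast
  ultimately have bounds: "delta_minus J \<le> \<alpha>" "\<alpha> + ev u + ev a + ev b + ev w \<le> delta_plus J"
    using delta_minus_le_inf sup_le_delta_plus xy(1,2) by metis+
  have "\<forall>c. 0 \<le> \<alpha> c"
    using xs ys \<open>inf x y = \<alpha>\<close> by (auto simp: simplex_def inf_fun_def)
  then have "2 \<le> r" and \<alpha>_simplex: "\<alpha> \<in> simplex n (r - 2)"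
    using simplex_diff_two[OF xs xy(3) 2(3)] by (simp_all add: \<alpha>_def)
  have "0 < \<rho> y * \<rho> x"
    using xy(1,2) supp nonneg by (auto intro!: mult_pos_pos simp: less_le)
  then have "\<rho> y * \<rho> x \<le> \<rho> (y + ev u - ev a) * \<rho> (x - ev u + ev a) \<or>
             \<rho> y * \<rho> x \<le> \<rho> (y + ev u - ev b) * \<rho> (x - ev u + ev b)"
    using T0_rep_three_term[OF T0 \<open>2 \<le> r\<close> \<alpha>_simplex bounds xy(3) 2(1-3)]
    by (simp add: x y algebra_simps)
  moreover have "x u > 0" "y a > 0" "y b > 0"
    using xs ys xy(4) 2(4,5) by (auto simp: simplex_def) (metis le_less_trans)+
  then have "x - ev u + ev l \<in> simplex n r" "y + ev u - ev l \<in> simplex n r"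
    if "l = a \<or> l = b" for l
    using simplex_move[OF xs _ xy(3)] simplex_move[OF ys _ _ xy(3)] that 2(1,2)
    by (auto simp: algebra_simps)
  ultimately show ?thesis
    unfolding exchange_at_def using xs ys 2(1,2,4,5)
    by (auto simp: simplex_weight_def mult.commute)
qed

lemma mult_le_mult_cancel_pos:
  fixes X Y V W p q :: real
  assumes "0 < p" "0 < q" "0 \<le> Y" "0 \<le> V" "X * p \<le> V * q" "q * Y \<le> p * W"
  shows "X * Y \<le> V * W"
proof -
  have "(X * p) * (q * Y) \<le> (V * q) * (p * W)"
    using assms by (intro mult_mono[OF assms(5,6)]) auto
  then have "(p * q) * (X * Y) \<le> (p * q) * (V * W)"
    by (simp add: algebra_simps)
  then show ?thesis using assms(1,2) by simp
qed

locale M_convex_weight =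
  fixes n :: nat and J :: "(nat \<Rightarrow> int) set" and R :: "(nat \<Rightarrow> int) \<Rightarrow> real"
  assumes M_convex: "M_convex_set n J"
    and nonneg: "0 \<le> R z"
    and pos_iff: "0 < R z \<longleftrightarrow> z \<in> J"
    and local_exchange:
      "x \<in> J \<Longrightarrow> y \<in> J \<Longrightarrow> u < n \<Longrightarrow> y u < x u \<Longrightarrow> pdist n x y \<le> 2 \<Longrightarrow> exchange_at n R x y u"
begin

lemma in_J_if_mult_le:
  assumes "R x * R y \<le> R x' * R y'" "x \<in> J" "y \<in> J"
  shows "x' \<in> J" "y' \<in> J"
proof -
  have "0 < R x * R y" using assms(2,3) pos_iff by simp
  then have "0 < R x' * R y'" using assms(1) by linarith
  then show "x' \<in> J" "y' \<in> J"
    using nonneg[of x'] nonneg[of y'] pos_iff by (auto simp: zero_less_mult_iff)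
qed

lemma local_exchange_ratio_bound:
  assumes "x \<in> J" "u < n" "z \<in> J" "z u < x u"
    and z: "z = x - ev w + ev t - ev u + ev v"
    and ratio: "x - ev w + ev v \<in> J \<Longrightarrow>
      R (x - ev u + ev t) * R (x - ev w + ev v) \<le> R (x - ev u + ev v) * R (x - ev w + ev t)"
  shows "R x * R z \<le> R (x - ev u + ev v) * R (x - ev w + ev t)"
proof -
  have "x = z + ev w + ev u - ev t - ev v" by (simp add: z)
  then have "pdist n x z \<le> 2" using pdist_add_two_le[of n z w u t v] by simp
  then obtain l where l: "x l < z l"
    and local: "R x * R z \<le> R (x - ev u + ev l) * R (z + ev u - ev l)"
    using local_exchange assms(1-4) unfolding exchange_at_def by blast
  have "l = v \<or> l = t" using l by (auto simp: z split: if_splits)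
  then show ?thesis
  proof
    assume "l = v"
    then show ?thesis using local by (simp add: z algebra_simps)
  next
    assume "l = t"
    then have local_t: "R x * R z \<le> R (x - ev u + ev t) * R (x - ev w + ev v)"
      using local by (simp add: z algebra_simps)
    then have "x - ev w + ev v \<in> J" using in_J_if_mult_le assms(1,3) by blast
    then show ?thesis using ratio local_t by linarith
  qed
qed

lemma exchange_step_other_coordinate:
  assumes xy: "x \<in> J" "y \<in> J" "u < n" "y u < x u"
    and w: "w < n" "w \<noteq> u" "y w < x w"
    and IH: "\<And>x'. x' \<in> J \<Longrightarrow> y u < x' u \<Longrightarrow> pdist n x' y < pdist n x y \<Longrightarrow> exchange_at n R x' y u"
  shows "exchange_at n R x y u"
proof -
  define T where "T = {t. t < n \<and> x t < y t \<and> x - ev w + ev t \<in> J}"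
  define \<phi> where "\<phi> t = R (x - ev u + ev t) / R (x - ev w + ev t)" for t
  have T: "finite T" "T \<noteq> {}"
    using M_convex_setD[OF M_convex xy(2,1) w(1,3)] by (auto simp: T_def)
  \<comment> \<open>choosing \<open>t\<close> with minimal ratio supplies the hypothesis of \<open>local_exchange_ratio_bound\<close>\<close>
  define t where "t = arg_min_on \<phi> T"
  have "t \<in> T" and t_min: "\<And>t'. t' \<in> T \<Longrightarrow> \<phi> t \<le> \<phi> t'"
    using arg_min_if_finite(1)[OF T] arg_min_least[OF T] by (simp_all add: t_def)
  then have t: "t < n" "x t < y t" and x'J: "x - ev w + ev t \<in> J" by (auto simp: T_def)
  define x' where "x' = x - ev w + ev t"
  have "t \<noteq> u" "t \<noteq> w" using t xy(4) w(3) by auto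
  have "pdist n x' y < pdist n x y"
    unfolding x'_def using pdist_move_left_less w t by blast
  moreover have "y u < x' u" using xy(4) \<open>t \<noteq> u\<close> w(2) by (simp add: x'_def)
  ultimately have "exchange_at n R x' y u" using IH x'J by (simp add: x'_def)
  then obtain v where v: "v < n" "x' v < y v"
    and IH_v: "R x' * R y \<le> R (x' - ev u + ev v) * R (y + ev u - ev v)"
    unfolding exchange_at_def by blast
  have "v \<noteq> w" using v(2) w(3) \<open>t \<noteq> w\<close> by (auto simp: x'_def)
  then have xv: "x v < y v" using v(2) by (auto simp: x'_def split: if_splits)
  define z where "z = x' - ev u + ev v"
  have zJ: "z \<in> J" using in_J_if_mult_le[OF IH_v] x'J xy(2) by (simp add: z_def x'_def)
  have "R (x - ev u + ev t) * R (x - ev w + ev v) \<le> R (x - ev u + ev v) * R x'"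
    if "x - ev w + ev v \<in> J"
  proof -
    have "v \<in> T" using that v(1) xv by (simp add: T_def)
    then have "\<phi> t \<le> \<phi> v" by (rule t_min)
    moreover have "0 < R x'" "0 < R (x - ev w + ev v)"
      using pos_iff x'J that by (simp_all add: x'_def)
    ultimately show ?thesis
      by (simp add: \<phi>_def x'_def divide_le_eq le_divide_eq mult.commute mult.left_commute)
  qed
  moreover have "z u < x u" using \<open>t \<noteq> u\<close> w(2) xv xy(4) by (auto simp: z_def x'_def)
  ultimately have "R x * R z \<le> R (x - ev u + ev v) * R x'"
    using local_exchange_ratio_bound[OF xy(1,3) zJ] by (simp add: z_def x'_def)
  moreover have "0 < R z" "0 < R x'" using pos_iff zJ x'J by (simp_all add: x'_def)
  ultimately have "R x * R y \<le> R (x - ev u + ev v) * R (y + ev u - ev v)"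
    using mult_le_mult_cancel_pos nonneg IH_v[folded z_def] by blast
  then show ?thesis unfolding exchange_at_def using v(1) xv by blast
qed

lemma exchange_step_same_coordinate:
  assumes xy: "x \<in> J" "y \<in> J" "u < n" "y u + 1 < x u"
    and IH: "\<And>y'. y' \<in> J \<Longrightarrow> y' u < x u \<Longrightarrow> pdist n x y' < pdist n x y \<Longrightarrow> exchange_at n R x y' u"
  shows "exchange_at n R x y u"
proof -
  obtain v0 where v0: "v0 < n" "x v0 < y v0" and y'J: "y + ev u - ev v0 \<in> J"
    using M_convex_setD[OF M_convex xy(2,1,3)] xy(4) by auto
  define y' where "y' = y + ev u - ev v0"
  have "v0 \<noteq> u" using v0(2) xy(4) by auto
  have "pdist n x y' < pdist n x y"
    unfolding y'_def pdist_move_right using pdist_move_left_less xy(3,4) v0(2) by simp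
  moreover have "y' u < x u" using xy(4) \<open>v0 \<noteq> u\<close> by (simp add: y'_def)
  ultimately have "exchange_at n R x y' u" using IH y'J by (simp add: y'_def)
  then obtain v where v: "v < n" "x v < y' v"
    and IH_v: "R x * R y' \<le> R (x - ev u + ev v) * R (y' + ev u - ev v)"
    unfolding exchange_at_def by blast
  have "v \<noteq> u" using v(2) \<open>y' u < x u\<close> by auto
  have xv: "x v < y v" using v(2) \<open>v \<noteq> u\<close> by (auto simp: y'_def split: if_splits)
  define z where "z = y' + ev u - ev v"
  have zJ: "z \<in> J" using in_J_if_mult_le[OF IH_v] xy(1) y'J by (simp add: z_def y'_def)
  have "z = y + ev u + ev u - ev v0 - ev v" by (simp add: z_def y'_def)
  then have "pdist n z y \<le> 2" using pdist_add_two_le[of n y u u v0 v] by simp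
  moreover have "y u < z u" using \<open>v0 \<noteq> u\<close> \<open>v \<noteq> u\<close> by (simp add: z_def y'_def)
  ultimately obtain l where l: "z l < y l"
    and local: "R z * R y \<le> R (z - ev u + ev l) * R (y + ev u - ev l)"
    using local_exchange[OF zJ xy(2,3)] unfolding exchange_at_def by blast
  have "l = v \<or> l = v0" using l by (auto simp: z_def y'_def split: if_splits)
  then have "R z * R y \<le> R y' * R (y + ev u - ev v)"
    using local by (auto simp: z_def y'_def algebra_simps)
  moreover have "0 < R y'" "0 < R z" using pos_iff zJ y'J by (simp_all add: y'_def)
  ultimately have "R x * R y \<le> R (x - ev u + ev v) * R (y + ev u - ev v)"
    using mult_le_mult_cancel_pos nonneg IH_v[folded z_def] by blast
  then show ?thesis unfolding exchange_at_def using v(1) xv by blast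
qed

theorem exchange:
  "x \<in> J \<Longrightarrow> y \<in> J \<Longrightarrow> u < n \<Longrightarrow> y u < x u \<Longrightarrow> exchange_at n R x y u"
proof (induction "pdist n x y" arbitrary: x y rule: less_induct)
  case less
  show ?case
  proof (cases "\<exists>w<n. w \<noteq> u \<and> y w < x w")
    case True
    then obtain w where "w < n" "w \<noteq> u" "y w < x w" by blast
    then show ?thesis using exchange_step_other_coordinate less by blast
  next
    case no_other: False
    show ?thesis
    proof (cases "y u + 1 < x u")
      case True
      then show ?thesis using exchange_step_same_coordinate less by blast
    next
      case False
      have "pdist n x y \<le> (\<Sum>i<n. if i = u then 1 else 0)"
        unfolding pdist_def using no_other False by (intro sum_mono) auto
      also have "\<dots> \<le> 2" by simp
      finally show ?thesis using local_exchange less.prems by blast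
    qed
  qed
qed

end

theorem propositionB:
  fixes n r :: nat and J :: "(nat \<Rightarrow> int) set" and \<rho> :: "(nat \<Rightarrow> int) \<Rightarrow> real"
  assumes "J \<subseteq> simplex n r"
    and "M_convex_set n J"
    and "\<forall>\<alpha>\<in>simplex n r. \<rho> \<alpha> \<ge> 0"
    and "{\<alpha>\<in>simplex n r. \<rho> \<alpha> \<noteq> 0} = J"
  shows "T0_rep n r J \<rho> \<longleftrightarrow> M_convex_fun n (neglog_fun n r \<rho>)"
proof -
  let ?R = "simplex_weight n r \<rho>"
  have "J \<noteq> {}" using assms(2) by (simp add: M_convex_set_def)
  then have M_convex_iff: "M_convex_fun n (neglog_fun n r \<rho>) \<longleftrightarrow>
      (\<forall>x\<in>J. \<forall>y\<in>J. \<forall>u<n. y u < x u \<longrightarrow> exchange_at n ?R x y u)"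
    using M_convex_fun_neglog_iff_exchange assms(1,3,4) by blast
  show ?thesis
  proof
    assume T0: "T0_rep n r J \<rho>"
    interpret M_convex_weight n J ?R
    proof
      show "0 \<le> ?R z" for z using assms(3) by (simp add: simplex_weight_def)
      show "0 < ?R z \<longleftrightarrow> z \<in> J" for z using assms(3,4) by (auto simp: simplex_weight_def less_le)
    qed (use assms(2) exchange_at_if_T0_rep_pdist_le_2[OF assms T0] in auto)
    show "M_convex_fun n (neglog_fun n r \<rho>)" using exchange M_convex_iff by blast
  next
    assume "M_convex_fun n (neglog_fun n r \<rho>)"
    then show "T0_rep n r J \<rho>" using M_convex_iff T0_rep_if_exchange assms(3,4) by blast
  qed
qed

end
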